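(* Let $p\ge5$ be prime, $i,j\in\mathbb{N}_0$, $a\in\{2,\dots,(p-1)/2\}$, and let $o_a$ be the multiplicative order of $a(1-a)^{-1}$ in $(\mathbb{Z}/p\mathbb{Z})^*$. Then the $\mathbb{Z}_p$-submodule $\vartheta_a(\mathfrak{p}^i\wedge\mathfrak{p}^j)$ of $K$ (spanned by all $\vartheta_a(x\wedge y)$, $x\in\mathfrak{p}^i$, $y\in\mathfrak{p}^j$) equals $\mathfrak{p}^{i+j+\epsilon(i,j)}$, where $\epsilon(i,j)=1$ if $o_a\mid(i-j)$ and $\epsilon(i,j)=0$ otherwise. In particular $\vartheta_a(\mathfrak{p}^i\wedge\mathfrak{p}^i)=\mathfrak{p}^{2i+1}$, so the restriction of $\vartheta_a$ lies in $\hat H_i$ for all $i\in\mathbb{N}_0$.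
   Context: Let $\theta$ be a primitive $p$-th root of unity, $K=\mathbb{Q}_p(\theta)$, $\mathcal{O}$ its ring of integers, $\mathfrak{p}$ its maximal ideal; $\mathfrak{p}^j$ is the unique ideal of index $p^j$ in $\mathcal{O}$. For $j\in\mathbb{Z}$ prime to $p$, $\sigma_j$ is the Galois automorphism of $K$ with $\theta\mapsto\theta^j$. For $a\in\{2,\dots,(p-1)/2\}$, $\vartheta_a:K\wedge K\to K$ is defined by $\vartheta_a(x\wedge y)=\sigma_a(x)\sigma_{1-a}(y)-\sigma_{1-a}(x)\sigma_a(y)$. $P=\langle\theta\rangle$ acts by multiplication on ideals and diagonally on exterior squares; $\hat{H}_i=\{\gamma\in\mathrm{Hom}_P(\mathfrak{p}^i\wedge\mathfrak{p}^i,\mathfrak{p}^{2i+1}) \mid \gamma \text{ surjective}\}$. *)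

theory Defs
  imports "HOL-Number_Theory.Number_Theory"
begin

text \<open>Fix a prime p. The p-adic integers Z_p are represented as compatible
sequences of residues x n in [0, p^n) with x (Suc n) mod p^n = x n.
The ring of integers O = Z_p[theta] of K = Q_p(theta) is free over Z_p with basis
1, theta, ..., theta^(p-2); an element of O is represented as v with v n k the
residue modulo p^n of its k-th coordinate (k < p-1), and v n k = 0 for k >= p-1.
Multiplication uses theta^p = 1 and theta^(p-1) = -(1 + ... + theta^(p-2)).\<close>

definition Zp :: "nat \<Rightarrow> (nat \<Rightarrow> int) set" where
  "Zp p = {x. \<forall>n. 0 \<le> x n \<and> x n < int p ^ n \<and> x (Suc n) mod int p ^ n = x n}"

type_synonym oelt = "nat \<Rightarrow> nat \<Rightarrow> int"

definition Ocar :: "nat \<Rightarrow> oelt set" where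
  "Ocar p = {v. (\<forall>n k. p - 1 \<le> k \<longrightarrow> v n k = 0) \<and>
                (\<forall>n k. 0 \<le> v n k \<and> v n k < int p ^ n) \<and>
                (\<forall>n k. v (Suc n) k mod int p ^ n = v n k)}"

definition oadd :: "nat \<Rightarrow> oelt \<Rightarrow> oelt \<Rightarrow> oelt" where
  "oadd p x y = (\<lambda>n k. if k < p - 1 then (x n k + y n k) mod int p ^ n else 0)"

definition osub :: "nat \<Rightarrow> oelt \<Rightarrow> oelt \<Rightarrow> oelt" where
  "osub p x y = (\<lambda>n k. if k < p - 1 then (x n k - y n k) mod int p ^ n else 0)"

text \<open>Coefficient of theta^m (m < p) in the product computed in Z[x]/(x^p - 1).\<close>
definition oconv :: "nat \<Rightarrow> oelt \<Rightarrow> oelt \<Rightarrow> nat \<Rightarrow> nat \<Rightarrow> int" where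
  "oconv p x y n m = (\<Sum>k<p - 1. \<Sum>l<p - 1. if (k + l) mod p = m then x n k * y n l else 0)"

definition omul :: "nat \<Rightarrow> oelt \<Rightarrow> oelt \<Rightarrow> oelt" where
  "omul p x y = (\<lambda>n m. if m < p - 1 then (oconv p x y n m - oconv p x y n (p - 1)) mod int p ^ n else 0)"

definition oone :: "nat \<Rightarrow> oelt" where
  "oone p = (\<lambda>n k. if k = 0 then 1 mod int p ^ n else 0)"

definition otheta :: "nat \<Rightarrow> oelt" where
  "otheta p = (\<lambda>n k. if k = 1 then 1 mod int p ^ n else 0)"

definition opow :: "nat \<Rightarrow> oelt \<Rightarrow> nat \<Rightarrow> oelt" where
  "opow p x i = (omul p x ^^ i) (oone p)"

text \<open>Galois automorphism sigma_j : theta \<mapsto> theta^j (j an integer prime to p).\<close>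
definition osigma_coeff :: "nat \<Rightarrow> int \<Rightarrow> oelt \<Rightarrow> nat \<Rightarrow> nat \<Rightarrow> int" where
  "osigma_coeff p j x n m = (\<Sum>k<p - 1. if (j * int k) mod int p = int m then x n k else 0)"

definition osigma :: "nat \<Rightarrow> int \<Rightarrow> oelt \<Rightarrow> oelt" where
  "osigma p j x = (\<lambda>n m. if m < p - 1
      then (osigma_coeff p j x n m - osigma_coeff p j x n (p - 1)) mod int p ^ n else 0)"

definition oideal :: "nat \<Rightarrow> nat \<Rightarrow> oelt set" where
  "oideal p i = {omul p (opow p (osub p (oone p) (otheta p)) i) y | y. y \<in> Ocar p}"

definition vartheta :: "nat \<Rightarrow> int \<Rightarrow> oelt \<Rightarrow> oelt \<Rightarrow> oelt" where
  "vartheta p a x y = osub p (omul p (osigma p a x) (osigma p (1 - a) y))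
                             (omul p (osigma p (1 - a) x) (osigma p a y))"

definition zp_span :: "nat \<Rightarrow> oelt set \<Rightarrow> oelt set" where
  "zp_span p S = {z. \<exists>(m::nat) (c::nat \<Rightarrow> nat \<Rightarrow> int) (s::nat \<Rightarrow> oelt).
      (\<forall>l<m. c l \<in> Zp p \<and> s l \<in> S) \<and>
      z = (\<lambda>n k. if k < p - 1 then (\<Sum>l<m. c l n * s l n k) mod int p ^ n else 0)}"

definition ord_a :: "nat \<Rightarrow> int \<Rightarrow> nat" where
  "ord_a p a = nat (ord (int p) ((a * modular_inverse (int p) (1 - a)) mod int p))"

end

theory Submission
  imports Defs "HOL-Computational_Algebra.Polynomial"
begin

(* At level n an element of O is a polynomial in theta of degree < p - 1 with coefficients mod
   p^n, so O/p^n O = Z[X]/(p^n, Phi_p), frak-p = (pi) with pi = 1 - theta, and sigma_s acts by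
   X |-> X^s.  Since sigma_s(pi) = pi (1 + theta + ... + theta^(s-1)), writing x = pi^i u and
   y = pi^j v gives vartheta_a(x wedge y) = pi^(i+j) C, where C is congruent modulo pi to
   (a^i (1-a)^j - (1-a)^i a^j) u v, and p divides this constant exactly when o_a divides i - j.
   If it does not, the images of the pairs (pi^i theta^l, pi^j theta^l) are unit multiples of
   pi^(i+j) theta^l and span frak-p^(i+j).  If it does, C lies in frak-p because p does, and the
   images of (pi^i theta^l, pi^j theta^(l+1)) and (pi^i theta^(l+1-a), pi^j theta^(l+1-a)) differ
   by a unit times pi^(i+j+1) theta^l.  Equivariance under theta holds because
   theta^a theta^(1-a) = theta. *)

lemma alternating_binomial_cong:
  assumes "prime p" and "k < p"
  shows "[(-1) ^ k * int ((p - 1) choose k) = 1] (mod int p)"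
  using assms(2)
proof (induction k)
  case (Suc k)
  have "Suc (p - 1) = p" using prime_gt_0_nat[OF assms(1)] by simp
  then have "p choose Suc k = ((p - 1) choose k) + ((p - 1) choose Suc k)"
    using binomial_Suc_Suc[of "p - 1" k] by simp
  then have pascal: "int ((p - 1) choose Suc k) = int (p choose Suc k) - int ((p - 1) choose k)"
    by simp
  have "[int (p choose Suc k) = 0] (mod int p)"
    using dvd_choose_prime[of "Suc k" p] Suc.prems assms(1)
    by (simp add: cong_0_iff prime_gt_0_nat flip: of_nat_dvd_iff)
  then have "[(-1) ^ Suc k * int ((p - 1) choose Suc k) = (-1) ^ Suc k * (0 - int ((p - 1) choose k))] (mod int p)"
    unfolding pascal by (intro cong_mult cong_diff cong_refl)
  also have "(-1) ^ Suc k * (0 - int ((p - 1) choose k)) = (-1) ^ k * int ((p - 1) choose k)"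
    by simp
  also have "[\<dots> = 1] (mod int p)"
    using Suc by simp
  finally show ?case .
qed simp

lemma ord_of_nat: "ord (int m) (int y) = ord m y"
proof -
  have "[int y ^ d = 1] (mod int m) \<longleftrightarrow> [y ^ d = 1] (mod m)" for d
    by (metis cong_int_iff of_nat_power of_nat_1)
  then show ?thesis unfolding ord_def by simp
qed

lemma sum_mult_mod_reindex:
  fixes s p :: nat
  assumes "coprime s p"
  shows "(\<Sum>k<p. g (s * k mod p)) = (\<Sum>m<p. g m)"
proof -
  let ?h = "\<lambda>k. s * k mod p"
  have inj: "inj_on ?h {..<p}"
  proof (rule inj_onI)
    fix k k' assume "k \<in> {..<p}" "k' \<in> {..<p}" "?h k = ?h k'"
    then show "k = k'"
      using cong_mult_lcancel_nat[OF assms] by (simp add: cong_def)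
  qed
  have "?h ` {..<p} = {..<p}"
    by (rule endo_inj_surj[OF _ _ inj]) (auto intro: mod_less_divisor)
  then show ?thesis
    using sum.reindex[OF inj, of g] by simp
qed

lemma sum_lessThan_add: "(\<Sum>l<m + (k::nat). f l) = (\<Sum>l<m. f l) + (\<Sum>l<k. f (m + l))"
  by (induction k) (simp_all add: add.assoc)

lemma smult_sum_right: "smult c (\<Sum>i\<in>A. f i) = (\<Sum>i\<in>A. smult c (f i))"
  by (induction A rule: infinite_finite_induct) (simp_all add: smult_add_right)

lemma smult_of_dvd_coeffs:
  fixes f :: "int poly"
  assumes "\<And>k. d dvd coeff f k"
  shows "f = smult d (map_poly (\<lambda>c. c div d) f)"
  by (rule poly_eqI) (simp add: coeff_map_poly assms)

definition uniformizer :: "int poly" (\<open>\<pi>\<close>) where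
  "\<pi> = 1 - monom 1 1"

definition geom_poly :: "nat \<Rightarrow> int poly" where
  "geom_poly s = (\<Sum>k<s. monom 1 k)"

definition gal :: "nat \<Rightarrow> int poly \<Rightarrow> int poly" where
  "gal s f = pcompose f (monom 1 s)"

definition pi_quot :: "int poly \<Rightarrow> int poly" where
  "pi_quot f = - synthetic_div f 1"

lemma pi_quot_eq: "f = [:poly f 1:] + \<pi> * pi_quot f"
proof -
  have "\<pi> * pi_quot f = [:-1, 1:] * synthetic_div f 1"
    by (simp add: uniformizer_def pi_quot_def monom_Suc monom_0 one_pCons)
  then show ?thesis
    using synthetic_div_correct'[of 1 f] by (simp add: add.commute)
qed

lemma one_minus_monom_eq: "1 - monom 1 s = \<pi> * geom_poly s"
  using one_diff_power_eq[of "monom (1::int) 1" s]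
  by (simp add: uniformizer_def geom_poly_def monom_power)

lemma poly_geom_poly_1: "poly (geom_poly s) 1 = int s"
  by (simp add: geom_poly_def poly_sum poly_monom)

lemma uniformizer_nonzero: "\<pi> \<noteq> 0"
proof
  assume "\<pi> = 0"
  then have "coeff \<pi> 1 = 0" by simp
  then show False by (simp add: uniformizer_def)
qed

lemma poly_uniformizer_1: "poly \<pi> 1 = 0"
  by (simp add: uniformizer_def poly_monom)

lemma coeff_uniformizer_power: "coeff (\<pi> ^ n) k = (-1) ^ k * int (n choose k)"
proof (induction n arbitrary: k)
  case (Suc n)
  have "\<pi> ^ Suc n = \<pi> ^ n - pCons 0 (\<pi> ^ n)"
    by (simp add: uniformizer_def monom_Suc monom_0 mult_pCons_left algebra_simps)
  then show ?case
    using Suc.IH[of k] Suc.IH[of "k - 1"]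
    by (cases k) (simp_all only: coeff_diff coeff_pCons_0 coeff_pCons_Suc, simp_all add: algebra_simps)
qed simp

lemma gal_monom: "gal s (monom c k) = monom c (s * k)"
  unfolding gal_def
  by (induction k) (simp_all add: monom_0 monom_Suc pcompose_pCons mult_monom)

lemma gal_add: "gal s (f + g) = gal s f + gal s g" by (simp add: gal_def pcompose_add)
lemma gal_diff: "gal s (f - g) = gal s f - gal s g" by (simp add: gal_def pcompose_diff)
lemma gal_mult: "gal s (f * g) = gal s f * gal s g" by (simp add: gal_def pcompose_mult)
lemma gal_smult: "gal s (smult c f) = smult c (gal s f)" by (simp add: gal_def pcompose_smult)
lemma gal_sum: "gal s (sum f A) = (\<Sum>x\<in>A. gal s (f x))" by (simp add: gal_def pcompose_sum)
lemma gal_1: "gal s 1 = 1" by (simp add: gal_def pcompose_1)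
lemma gal_power: "gal s (f ^ k) = gal s f ^ k" by (induction k) (simp_all add: gal_1 gal_mult)

lemma gal_uniformizer: "gal s \<pi> = \<pi> * geom_poly s"
proof -
  have "gal s \<pi> = 1 - monom 1 s"
    by (simp add: uniformizer_def gal_diff gal_1 gal_monom)
  then show ?thesis by (simp only: one_minus_monom_eq)
qed

lemma pi_quot_unique:
  assumes f: "f = [:c:] + \<pi> * h"
  shows "h = pi_quot f"
proof -
  have c: "c = poly f 1"
    using arg_cong[OF f, of "\<lambda>g. poly g 1"] by (simp add: poly_uniformizer_1)
  have "[:c:] + \<pi> * h = f" by (rule f[symmetric])
  also have "f = [:c:] + \<pi> * pi_quot f" by (rule pi_quot_eq[of f, folded c])
  finally have "\<pi> * h = \<pi> * pi_quot f" by (rule add_left_imp_eq)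
  then show ?thesis using uniformizer_nonzero by simp
qed

lemma pi_quot_add: "pi_quot (f + g) = pi_quot f + pi_quot g"
proof (rule pi_quot_unique[symmetric])
  have "f + g = ([:poly f 1:] + \<pi> * pi_quot f) + ([:poly g 1:] + \<pi> * pi_quot g)"
    using pi_quot_eq[of f] pi_quot_eq[of g] by (rule arg_cong2[where f = "(+)"])
  then show "f + g = [:poly f 1 + poly g 1:] + \<pi> * (pi_quot f + pi_quot g)"
    by (simp add: algebra_simps)
qed

lemma pi_quot_smult: "pi_quot (smult c f) = smult c (pi_quot f)"
proof (rule pi_quot_unique[symmetric])
  have "smult c f = smult c ([:poly f 1:] + \<pi> * pi_quot f)"
    using pi_quot_eq[of f] by (rule arg_cong)
  then show "smult c f = [:c * poly f 1:] + \<pi> * smult c (pi_quot f)"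
    by (simp add: smult_add_right)
qed

lemma pi_quot_sum: "pi_quot (\<Sum>x\<in>A. f x) = (\<Sum>x\<in>A. pi_quot (f x))"
  by (induction A rule: infinite_finite_induct) (simp_all add: pi_quot_add pi_quot_def[of 0])

lemma pi_quot_diff: "pi_quot (f - g) = pi_quot f - pi_quot g"
  using pi_quot_add[of "f - g" g] by simp

definition gal_quot :: "nat \<Rightarrow> int poly \<Rightarrow> int poly" where
  "gal_quot s f = pi_quot (gal s f - f)"

lemma gal_eq: "gal s f = f + \<pi> * gal_quot s f"
proof -
  have "poly (gal s f - f) 1 = 0" by (simp add: gal_def poly_pcompose poly_monom)
  then have "gal s f - f = \<pi> * gal_quot s f"
    using pi_quot_eq[of "gal s f - f"] by (simp add: gal_quot_def)
  then show ?thesis by (simp add: diff_eq_eq add.commute)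
qed

lemma gal_quot_sum_smult:
  "gal_quot s (\<Sum>k\<in>A. smult (c k) (f k)) = (\<Sum>k\<in>A. smult (c k) (gal_quot s (f k)))"
  by (simp add: gal_quot_def gal_sum gal_smult pi_quot_sum pi_quot_smult pi_quot_diff
      sum_subtractf[symmetric] smult_diff_right[symmetric])

section \<open>The polynomial shape of \<open>\<vartheta>\<close>\<close>

definition wedge_gal :: "nat \<Rightarrow> nat \<Rightarrow> int poly \<Rightarrow> int poly \<Rightarrow> int poly" where
  "wedge_gal s t f g = gal s f * gal t g - gal t f * gal s g"

definition pi_ratio :: "nat \<Rightarrow> nat \<Rightarrow> nat \<Rightarrow> nat \<Rightarrow> int poly" where
  "pi_ratio s t i j = geom_poly s ^ i * geom_poly t ^ j"

definition wedge_cofactor :: "nat \<Rightarrow> nat \<Rightarrow> nat \<Rightarrow> nat \<Rightarrow> int poly \<Rightarrow> int poly \<Rightarrow> int poly" where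
  "wedge_cofactor s t i j f g = pi_ratio s t i j * gal s f * gal t g - pi_ratio t s i j * gal t f * gal s g"

lemma poly_pi_ratio_1: "poly (pi_ratio s t i j) 1 = int s ^ i * int t ^ j"
  by (simp add: pi_ratio_def poly_geom_poly_1)

lemma wedge_gal_uniformizer_powers:
  "wedge_gal s t (\<pi> ^ i * f) (\<pi> ^ j * g) = \<pi> ^ (i + j) * wedge_cofactor s t i j f g"
  unfolding wedge_gal_def wedge_cofactor_def pi_ratio_def
  by (simp add: gal_mult gal_power gal_uniformizer power_mult_distrib power_add algebra_simps)

lemma wedge_gal_monom_mult:
  "wedge_gal s t (monom 1 1 * f) (monom 1 1 * g) = monom 1 (s + t) * wedge_gal s t f g"
proof -
  have "monom (1::int) (s + t) = monom 1 s * monom 1 t" by (simp add: mult_monom)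
  then show ?thesis by (simp add: wedge_gal_def gal_mult gal_monom algebra_simps)
qed

definition wedge_rest :: "nat \<Rightarrow> nat \<Rightarrow> nat \<Rightarrow> nat \<Rightarrow> int poly \<Rightarrow> int poly \<Rightarrow> int poly" where
  "wedge_rest s t i j f g =
     pi_ratio s t i j * (f * gal_quot t g + gal_quot s f * g + \<pi> * gal_quot s f * gal_quot t g
       - f * gal_quot s g - gal_quot t f * g - \<pi> * gal_quot t f * gal_quot s g)
     + (pi_quot (pi_ratio s t i j) - pi_quot (pi_ratio t s i j)) * gal t f * gal s g"

lemma wedge_cofactor_decomp:
  "wedge_cofactor s t i j f g
     = smult (int s ^ i * int t ^ j - int t ^ i * int s ^ j) (gal t f * gal s g) + \<pi> * wedge_rest s t i j f g"
proof -
  let ?A = "pi_ratio s t i j" and ?B = "pi_ratio t s i j"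
  let ?K = "f * gal_quot t g + gal_quot s f * g + \<pi> * gal_quot s f * gal_quot t g
       - f * gal_quot s g - gal_quot t f * g - \<pi> * gal_quot t f * gal_quot s g"
  have "?A - ?B = ([:int s ^ i * int t ^ j:] + \<pi> * pi_quot ?A) - ([:int t ^ i * int s ^ j:] + \<pi> * pi_quot ?B)"
    using pi_quot_eq[of ?A, unfolded poly_pi_ratio_1] pi_quot_eq[of ?B, unfolded poly_pi_ratio_1]
    by (rule arg_cong2[where f = "(-)"])
  then have AB: "?A - ?B = [:int s ^ i * int t ^ j - int t ^ i * int s ^ j:] + \<pi> * (pi_quot ?A - pi_quot ?B)"
    by (simp only: add_diff_add right_diff_distrib[symmetric] diff_pCons diff_self)
  have K: "gal s f * gal t g - gal t f * gal s g = \<pi> * ?K"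
    by (subst (1 2 3 4) gal_eq) (simp add: algebra_simps)
  have "wedge_cofactor s t i j f g = ?A * (gal s f * gal t g - gal t f * gal s g) + (?A - ?B) * (gal t f * gal s g)"
    by (simp add: wedge_cofactor_def algebra_simps)
  also have "\<dots> = ?A * (\<pi> * ?K) + ([:int s ^ i * int t ^ j - int t ^ i * int s ^ j:] + \<pi> * (pi_quot ?A - pi_quot ?B)) * (gal t f * gal s g)"
    by (simp only: K AB)
  finally show ?thesis
    by (simp add: wedge_rest_def algebra_simps)
qed

section \<open>Congruences modulo \<open>(p^n, Phi)\<close>\<close>

locale cyclo_cong =
  fixes p :: nat
begin

abbreviation Phi :: "int poly" where
  "Phi \<equiv> geom_poly p"

text \<open>Congruence modulo the ideal \<open>(p^n, Phi)\<close> of \<open>\<int>[X]\<close>; the quotient is \<open>O/p^n O\<close>, with \<open>X\<close>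
  standing for \<open>\<theta>\<close>.\<close>

definition ocong :: "nat \<Rightarrow> int poly \<Rightarrow> int poly \<Rightarrow> bool" where
  "ocong n f g \<longleftrightarrow> (\<exists>q r. f - g = smult (int p ^ n) q + Phi * r)"

lemma ocongI: "f - g = smult (int p ^ n) q + Phi * r \<Longrightarrow> ocong n f g"
  unfolding ocong_def by blast

lemma ocongE:
  assumes "ocong n f g"
  obtains q r where "f - g = smult (int p ^ n) q + Phi * r"
  using assms unfolding ocong_def by blast

lemma ocong_refl [simp]: "ocong n f f"
  by (rule ocongI[of _ _ _ 0 0]) simp

lemma ocong_sym: "ocong n f g \<Longrightarrow> ocong n g f"
proof (elim ocongE)
  fix q r
  assume "f - g = smult (int p ^ n) q + Phi * r"
  then show "ocong n g f"
    by (intro ocongI[of _ _ _ "- q" "- r"]) (simp add: algebra_simps)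
qed

lemma ocong_trans [trans]: "ocong n f g \<Longrightarrow> ocong n g h \<Longrightarrow> ocong n f h"
proof (elim ocongE)
  fix q r q' r'
  assume "f - g = smult (int p ^ n) q + Phi * r" "g - h = smult (int p ^ n) q' + Phi * r'"
  then show "ocong n f h"
    by (intro ocongI[of _ _ _ "q + q'" "r + r'"]) (simp add: algebra_simps smult_add_right)
qed

lemma ocong_eq_trans [trans]: "f = g \<Longrightarrow> ocong n g h \<Longrightarrow> ocong n f h"
  and eq_ocong_trans [trans]: "ocong n f g \<Longrightarrow> g = h \<Longrightarrow> ocong n f h"
  by simp_all

lemma ocong_add: "ocong n f g \<Longrightarrow> ocong n f' g' \<Longrightarrow> ocong n (f + f') (g + g')"
proof (elim ocongE)
  fix q r q' r'
  assume "f - g = smult (int p ^ n) q + Phi * r" "f' - g' = smult (int p ^ n) q' + Phi * r'"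
  then show "ocong n (f + f') (g + g')"
    by (intro ocongI[of _ _ _ "q + q'" "r + r'"]) (simp add: algebra_simps smult_add_right)
qed

lemma ocong_mult_left: "ocong n f g \<Longrightarrow> ocong n (h * f) (h * g)"
proof (elim ocongE)
  fix q r
  assume "f - g = smult (int p ^ n) q + Phi * r"
  then show "ocong n (h * f) (h * g)"
    by (intro ocongI[of _ _ _ "h * q" "h * r"]) (simp add: algebra_simps)
qed

lemma ocong_smult: "ocong n f g \<Longrightarrow> ocong n (smult c f) (smult c g)"
  using ocong_mult_left[of n f g "[:c:]"] by simp

lemma ocong_uminus: "ocong n f g \<Longrightarrow> ocong n (- f) (- g)"
  using ocong_smult[of n f g "-1"] by simp

lemma ocong_diff: "ocong n f g \<Longrightarrow> ocong n f' g' \<Longrightarrow> ocong n (f - f') (g - g')"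
  using ocong_add[of n f g "- f'" "- g'"] by (simp add: ocong_uminus)

lemma ocong_mult:
  assumes "ocong n f g" and "ocong n f' g'"
  shows "ocong n (f * f') (g * g')"
proof -
  have "ocong n (f' * f) (f' * g)" by (rule ocong_mult_left[OF assms(1)])
  also have "f' * g = g * f'" by (rule mult.commute)
  also have "ocong n (g * f') (g * g')" by (rule ocong_mult_left[OF assms(2)])
  finally show ?thesis by (simp add: mult.commute)
qed

lemma ocong_power: "ocong n f g \<Longrightarrow> ocong n (f ^ k) (g ^ k)"
  by (induction k) (auto intro: ocong_mult)

lemma ocong_sum: "(\<And>x. x \<in> A \<Longrightarrow> ocong n (f x) (g x)) \<Longrightarrow> ocong n (sum f A) (sum g A)"
  by (induction A rule: infinite_finite_induct) (auto intro: ocong_add)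

lemma ocong_Suc: "ocong (Suc n) f g \<Longrightarrow> ocong n f g"
proof (elim ocongE)
  fix q r
  assume "f - g = smult (int p ^ Suc n) q + Phi * r"
  then show "ocong n f g"
    by (intro ocongI[of _ _ _ "smult (int p) q" r]) (simp add: algebra_simps)
qed

lemma ocong_Phi_mult: "ocong n (Phi * r) 0"
  by (rule ocongI[of _ _ _ 0 r]) simp

lemma ocong_smult_prime_power: "ocong n (smult (int p ^ n) q) 0"
  by (rule ocongI[of _ _ _ _ 0]) simp

lemma ocong_iff_diff: "ocong n f g \<longleftrightarrow> ocong n (f - g) 0"
  unfolding ocong_def by simp

lemma ocong_smult_mod: "ocong n (smult (c mod int p ^ n) f) (smult c f)"
proof (rule ocongI[of _ _ _ "smult (- (c div int p ^ n)) f" 0])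
  show "smult (c mod int p ^ n) f - smult c f = smult (int p ^ n) (smult (- (c div int p ^ n)) f) + Phi * 0"
    by (simp add: smult_diff_left[symmetric] minus_div_mult_eq_mod[symmetric] algebra_simps)
qed

lemma ocong_monom_coeff_mod: "ocong n (monom (c mod int p ^ n) k) (monom c k)"
  using ocong_smult_mod[of n c "monom 1 k"] by (simp add: smult_monom)

lemma ocong_monom_mod: "ocong n (monom c k) (monom c (k mod p))"
proof -
  obtain q where k: "k = k mod p + p * q" by (metis div_mult_mod_eq add.commute mult.commute)
  have "1 - monom (1::int) (p * q) = 1 - monom 1 p ^ q"
    by (simp add: monom_power mult.commute)
  also have "\<dots> = \<pi> * Phi * (\<Sum>i<q. monom 1 p ^ i)"
    by (simp add: one_diff_power_eq one_minus_monom_eq)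
  finally have cyc: "monom (1::int) (p * q) - 1 = - (\<pi> * Phi * (\<Sum>i<q. monom 1 p ^ i))"
    by (simp add: algebra_simps)
  have "monom c k - monom c (k mod p) = smult c (monom 1 (k mod p)) * (monom 1 (p * q) - 1)"
    by (subst (1) k) (simp add: mult_monom smult_monom algebra_simps)
  also have "\<dots> = Phi * (- smult c (monom 1 (k mod p) * \<pi> * (\<Sum>i<q. monom 1 p ^ i)))"
    by (simp only: cyc) (simp add: algebra_simps)
  finally show ?thesis
    by (intro ocongI[of _ _ _ 0 "- smult c (monom 1 (k mod p) * \<pi> * (\<Sum>i<q. monom 1 p ^ i))"]) simp
qed

lemma ocong_monom_cong: "[k = k'] (mod p) \<Longrightarrow> ocong n (monom c k) (monom c k')"
  by (metis cong_def ocong_monom_mod ocong_sym ocong_trans)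

lemma ocong_gal_Phi:
  assumes "coprime s p"
  shows "ocong n (gal s Phi) Phi"
proof -
  have "gal s Phi = (\<Sum>k<p. monom 1 (s * k))" by (simp add: geom_poly_def gal_sum gal_monom)
  also have "ocong n \<dots> (\<Sum>k<p. monom 1 (s * k mod p))" by (intro ocong_sum ocong_monom_mod)
  also have "(\<Sum>k<p. monom (1::int) (s * k mod p)) = Phi"
    unfolding geom_poly_def by (rule sum_mult_mod_reindex[OF assms])
  finally show ?thesis .
qed

lemma ocong_gal:
  assumes "coprime s p" and "ocong n f g"
  shows "ocong n (gal s f) (gal s g)"
proof -
  from assms(2) obtain q r where "f - g = smult (int p ^ n) q + Phi * r" by (rule ocongE)
  then have "gal s f - gal s g = smult (int p ^ n) (gal s q) + gal s Phi * gal s r"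
    by (metis gal_diff gal_add gal_smult gal_mult)
  also have "ocong n \<dots> (0 + Phi * gal s r)"
    by (intro ocong_add ocong_mult ocong_gal_Phi[OF assms(1)] ocong_refl ocong_smult_prime_power)
  also have "ocong n \<dots> 0" using ocong_Phi_mult by simp
  finally show ?thesis by (simp only: ocong_iff_diff[of n "gal s f"])
qed

definition coherent :: "(nat \<Rightarrow> int poly) \<Rightarrow> bool" where
  "coherent F \<longleftrightarrow> (\<forall>n. ocong n (F (Suc n)) (F n))"

lemma coherent_const: "coherent (\<lambda>n. f)"
  by (simp add: coherent_def)

lemma coherent_add: "coherent F \<Longrightarrow> coherent G \<Longrightarrow> coherent (\<lambda>n. F n + G n)"
  unfolding coherent_def by (auto intro: ocong_add)

lemma coherent_diff: "coherent F \<Longrightarrow> coherent G \<Longrightarrow> coherent (\<lambda>n. F n - G n)"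
  unfolding coherent_def by (auto intro: ocong_diff)

lemma coherent_mult: "coherent F \<Longrightarrow> coherent G \<Longrightarrow> coherent (\<lambda>n. F n * G n)"
  unfolding coherent_def by (auto intro: ocong_mult)

lemma coherent_sum:
  "(\<And>l. l \<in> A \<Longrightarrow> coherent (F l)) \<Longrightarrow> coherent (\<lambda>n. \<Sum>l\<in>A. F l n)"
  unfolding coherent_def by (auto intro: ocong_sum)

lemma coherent_gal: "coprime s p \<Longrightarrow> coherent F \<Longrightarrow> coherent (\<lambda>n. gal s (F n))"
  unfolding coherent_def by (auto intro: ocong_gal)

lemma coherent_smult: "coherent F \<Longrightarrow> coherent (\<lambda>n. smult c (F n))"
  unfolding coherent_def by (auto intro: ocong_smult)

lemma coherent_smult_Zp:
  assumes c: "c \<in> Zp p" and F: "coherent F"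
  shows "coherent (\<lambda>n. smult (c n) (F n))"
  unfolding coherent_def
proof
  fix n
  have "ocong n (smult (c (Suc n)) (F (Suc n))) (smult (c (Suc n) mod int p ^ n) (F n))"
    using F ocong_smult_mod ocong_sym unfolding coherent_def by (metis ocong_smult ocong_trans)
  also have "c (Suc n) mod int p ^ n = c n" using c unfolding Zp_def by blast
  finally show "ocong n (smult (c (Suc n)) (F (Suc n))) (smult (c n) (F n))" .
qed

end

section \<open>Elements of \<open>O\<close> as coherent families of polynomials\<close>

locale odd_prime = cyclo_cong +
  assumes prime_p: "prime p" and p_gt_2: "2 < p"
begin

lemma p_pos: "int p ^ n > 0"
  using p_gt_2 by simp

lemma coeff_Phi: "coeff Phi k = (if k < p then 1 else 0)"
  by (simp add: geom_poly_def coeff_sum)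

lemma degree_Phi: "degree Phi = p - 1"
proof (rule antisym)
  show "degree Phi \<le> p - 1" by (rule degree_le) (auto simp: coeff_Phi)
  show "p - 1 \<le> degree Phi" by (rule le_degree) (use p_gt_2 in \<open>simp add: coeff_Phi\<close>)
qed

lemma lead_coeff_Phi: "lead_coeff Phi = 1"
  using p_gt_2 by (simp add: degree_Phi coeff_Phi)

lemma Phi_nonzero: "Phi \<noteq> 0"
  using lead_coeff_Phi by auto

lemma Phi_division: "\<exists>q. f = Phi * q + pseudo_mod f Phi" "k \<ge> p - 1 \<Longrightarrow> coeff (pseudo_mod f Phi) k = 0"
proof -
  obtain q r where qr: "pseudo_divmod f Phi = (q, r)" by fastforce
  with pseudo_divmod[OF Phi_nonzero qr] lead_coeff_Phi
  have "f = Phi * q + r" and "r = 0 \<or> degree r < p - 1" by (auto simp: degree_Phi)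
  moreover have "pseudo_mod f Phi = r" using qr by (simp add: pseudo_mod_def)
  ultimately show "\<exists>q. f = Phi * q + pseudo_mod f Phi" "k \<ge> p - 1 \<Longrightarrow> coeff (pseudo_mod f Phi) k = 0"
    by (auto intro: coeff_eq_0)
qed

lemma ocong_pseudo_mod_Phi: "ocong n (pseudo_mod f Phi) f"
proof -
  obtain q where "f = Phi * q + pseudo_mod f Phi" using Phi_division(1) by blast
  then have "pseudo_mod f Phi - f = smult (int p ^ n) 0 + Phi * (- q)" by (simp add: algebra_simps)
  then show ?thesis by (rule ocongI)
qed

lemma ocong_0_dvd_coeff:
  assumes small: "\<And>k. k \<ge> p - 1 \<Longrightarrow> coeff f k = 0" and "ocong n f 0"
  shows "int p ^ n dvd coeff f k"
proof -
  from \<open>ocong n f 0\<close> obtain q r where f: "f = smult (int p ^ n) q + Phi * r" by (auto elim: ocongE)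
  obtain s where q: "q = Phi * s + pseudo_mod q Phi" using Phi_division(1) by blast
  define g where "g = f - smult (int p ^ n) (pseudo_mod q Phi)"
  have g: "g = Phi * (r + smult (int p ^ n) s)"
    unfolding g_def by (subst f, subst q) (simp add: algebra_simps smult_add_right)
  have "g = 0"
  proof (rule ccontr)
    assume "g \<noteq> 0"
    then have "degree g = (p - 1) + degree (r + smult (int p ^ n) s)"
      unfolding g by (simp add: degree_mult_eq Phi_nonzero degree_Phi)
    moreover have "coeff g k = 0" if "k \<ge> p - 1" for k
      using small[OF that] Phi_division(2)[OF that] by (simp add: g_def)
    ultimately have "lead_coeff g = 0" by simp
    with \<open>g \<noteq> 0\<close> show False by simp
  qed
  then show ?thesis by (simp add: g_def)
qed

definition opoly :: "oelt \<Rightarrow> nat \<Rightarrow> int poly" where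
  "opoly w n = (\<Sum>k<p - 1. monom (w n k) k)"

definition reduced :: "oelt \<Rightarrow> nat \<Rightarrow> bool" where
  "reduced w n \<longleftrightarrow> (\<forall>k. (p - 1 \<le> k \<longrightarrow> w n k = 0) \<and> 0 \<le> w n k \<and> w n k < int p ^ n)"

lemma coeff_opoly: "coeff (opoly w n) k = (if k < p - 1 then w n k else 0)"
  by (simp add: opoly_def coeff_sum)

lemma opoly_eq_sum_smult: "opoly w n = (\<Sum>k<p - 1. smult (w n k) (monom 1 k))"
  by (simp add: opoly_def smult_monom)

lemma reduced_if_mod: "reduced (\<lambda>n k. if k < p - 1 then f n k mod int p ^ n else 0) n"
  using p_pos[of n] by (simp add: reduced_def)

lemma ocong_opoly_imp_eq:
  assumes r1: "reduced w1 n" and r2: "reduced w2 n" and "ocong n (opoly w1 n) (opoly w2 n)"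
  shows "w1 n = w2 n"
proof
  fix k
  show "w1 n k = w2 n k"
  proof (cases "k < p - 1")
    case True
    have "int p ^ n dvd coeff (opoly w1 n - opoly w2 n) k"
      using \<open>ocong n _ _\<close> by (intro ocong_0_dvd_coeff) (auto simp: coeff_opoly ocong_iff_diff[symmetric])
    then have "w1 n k mod int p ^ n = w2 n k mod int p ^ n"
      using True by (simp add: coeff_opoly mod_eq_dvd_iff)
    then show ?thesis using r1 r2 by (simp add: reduced_def)
  qed (use r1 r2 in \<open>simp add: reduced_def\<close>)
qed

lemma oelt_eqI:
  assumes "\<And>n. reduced w1 n" "\<And>n. reduced w2 n" "\<And>n. ocong n (opoly w1 n) (opoly w2 n)"
  shows "w1 = w2"
  using ocong_opoly_imp_eq assms by blast

lemma sum_monom_coeff_eq: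
  assumes "\<And>k. k \<ge> p - 1 \<Longrightarrow> coeff f k = 0"
  shows "(\<Sum>k<p - 1. monom (coeff f k) k) = f"
  by (rule poly_eqI) (auto simp: coeff_sum coeff_monom assms not_less)

lemma Ocar_intro:
  assumes r: "\<And>n. reduced w n" and c: "\<And>n. ocong n (opoly w (Suc n)) (opoly w n)"
  shows "w \<in> Ocar p"
  unfolding Ocar_def
proof (intro CollectI conjI allI impI)
  fix n k
  show "p - 1 \<le> k \<Longrightarrow> w n k = 0" "0 \<le> w n k" "w n k < int p ^ n"
    using r by (auto simp: reduced_def)
  show "w (Suc n) k mod int p ^ n = w n k"
  proof (cases "k < p - 1")
    case True
    have "int p ^ n dvd coeff (opoly w (Suc n) - opoly w n) k"
      using c by (intro ocong_0_dvd_coeff) (auto simp: coeff_opoly ocong_iff_diff[symmetric])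
    then have "w (Suc n) k mod int p ^ n = w n k mod int p ^ n"
      using True by (simp add: coeff_opoly mod_eq_dvd_iff)
    then show ?thesis using r[of n] by (simp add: reduced_def)
  qed (use r[of n] r[of "Suc n"] in \<open>simp add: reduced_def\<close>)
qed

lemma in_OcarI:
  assumes "\<And>n. reduced w n" and "\<And>n. ocong n (opoly w n) (G n)" and "coherent G"
  shows "w \<in> Ocar p"
proof (rule Ocar_intro[OF assms(1)])
  fix n
  have "ocong n (opoly w (Suc n)) (G (Suc n))" using assms(2) ocong_Suc by blast
  also have "ocong n (G (Suc n)) (G n)" using assms(3) coherent_def by blast
  also have "ocong n (G n) (opoly w n)" by (rule ocong_sym[OF assms(2)])
  finally show "ocong n (opoly w (Suc n)) (opoly w n)" .
qed

lemma Ocar_Suc_diff: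
  assumes "w \<in> Ocar p"
  shows "w (Suc n) k - w n k = int p ^ n * (w (Suc n) k div int p ^ n)"
proof -
  have "w (Suc n) k mod int p ^ n = w n k" using assms unfolding Ocar_def by blast
  then show ?thesis using minus_mod_eq_mult_div[of "w (Suc n) k" "int p ^ n"] by simp
qed

text \<open>Consecutive levels of an element of \<open>O\<close> differ by an exact multiple of \<open>p^n\<close>, so any
  fixed \<open>\<int>\<close>-linear image of the coordinates is coherent.\<close>

lemma coherent_coord_comb:
  assumes "w \<in> Ocar p"
  shows "coherent (\<lambda>n. \<Sum>k<p - 1. smult (w n k) (h k))"
  unfolding coherent_def
proof
  fix n
  have "(\<Sum>k<p - 1. smult (w (Suc n) k) (h k)) - (\<Sum>k<p - 1. smult (w n k) (h k))
     = smult (int p ^ n) (\<Sum>k<p - 1. smult (w (Suc n) k div int p ^ n) (h k))"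
    by (simp add: Ocar_Suc_diff[OF assms] smult_sum_right sum_subtractf[symmetric]
        flip: smult_diff_left)
  then show "ocong n (\<Sum>k<p - 1. smult (w (Suc n) k) (h k)) (\<Sum>k<p - 1. smult (w n k) (h k))"
    by (intro ocongI[of _ _ _ _ 0]) simp
qed

lemma coherent_opoly: "w \<in> Ocar p \<Longrightarrow> coherent (opoly w)"
  using coherent_coord_comb[of w "\<lambda>k. monom 1 k"] by (simp add: opoly_eq_sum_smult[abs_def])

definition of_levels :: "(nat \<Rightarrow> int poly) \<Rightarrow> oelt" where
  "of_levels F = (\<lambda>n k. if k < p - 1 then coeff (pseudo_mod (F n) Phi) k mod int p ^ n else 0)"

lemma reduced_of_levels: "reduced (of_levels F) n"
  unfolding of_levels_def by (rule reduced_if_mod)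

lemma ocong_opoly_of_levels: "ocong n (opoly (of_levels F) n) (F n)"
proof -
  let ?r = "pseudo_mod (F n) Phi"
  have "opoly (of_levels F) n = (\<Sum>k<p - 1. monom (coeff ?r k mod int p ^ n) k)"
    unfolding opoly_def of_levels_def by simp
  also have "ocong n \<dots> (\<Sum>k<p - 1. monom (coeff ?r k) k)"
    by (intro ocong_sum ocong_monom_coeff_mod)
  also have "(\<Sum>k<p - 1. monom (coeff ?r k) k) = ?r"
    by (intro sum_monom_coeff_eq Phi_division(2))
  also have "ocong n ?r (F n)" by (rule ocong_pseudo_mod_Phi)
  finally show ?thesis .
qed

lemma of_levels_in_Ocar: "coherent F \<Longrightarrow> of_levels F \<in> Ocar p"
  by (rule in_OcarI[OF reduced_of_levels ocong_opoly_of_levels])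

text \<open>\<open>omul\<close> and \<open>osigma\<close> take exponents modulo \<open>p\<close> and eliminate
  \<open>\<theta>^(p-1) = -(1 + \<dots> + \<theta>^(p-2))\<close> by subtracting its coefficient from the others.\<close>

lemma ocong_reduce_top:
  "ocong n (\<Sum>m<p - 1. monom ((c m - c (p - 1)) mod int p ^ n) m) (\<Sum>m<p. monom (c m) m)"
proof -
  have split: "(\<Sum>m<p. f m) = (\<Sum>m<p - 1. f m) + f (p - 1)" for f :: "nat \<Rightarrow> int poly"
    using p_gt_2 sum.lessThan_Suc[of f "p - 1"] by simp
  have "ocong n (\<Sum>m<p - 1. monom ((c m - c (p - 1)) mod int p ^ n) m) (\<Sum>m<p - 1. monom (c m - c (p - 1)) m)"
    by (intro ocong_sum ocong_monom_coeff_mod)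
  also have "(\<Sum>m<p - 1. monom (c m - c (p - 1)) m) = (\<Sum>m<p. monom (c m) m) - smult (c (p - 1)) Phi"
    by (simp add: split geom_poly_def smult_add_right smult_sum_right smult_monom sum_subtractf
        flip: diff_monom)
  also have "ocong n \<dots> (\<Sum>m<p. monom (c m) m)"
    using ocong_diff[OF ocong_refl ocong_Phi_mult[of n "[:c (p - 1):]"]] by (simp add: mult.commute)
  finally show ?thesis .
qed

lemma sum_monom_collect:
  "(\<Sum>m<p. monom (\<Sum>k\<in>K. if e k mod p = m then w k else 0) m) = (\<Sum>k\<in>K. monom (w k) (e k mod p))"
proof -
  have "(\<Sum>m<p. monom (\<Sum>k\<in>K. if e k mod p = m then w k else 0) m)
      = (\<Sum>m<p. \<Sum>k\<in>K. if e k mod p = m then monom (w k) m else 0)"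
    by (simp add: monom_sum if_distrib[of "\<lambda>x. monom x _"] cong: if_cong)
  also have "\<dots> = (\<Sum>k\<in>K. \<Sum>m<p. if e k mod p = m then monom (w k) m else 0)"
    by (rule sum.swap)
  also have "\<dots> = (\<Sum>k\<in>K. monom (w k) (e k mod p))"
    using p_gt_2 by (intro sum.cong refl) (simp add: sum.delta)
  finally show ?thesis .
qed

lemma sum_monom_collect2:
  "(\<Sum>m<p. monom (\<Sum>k\<in>A. \<Sum>l\<in>B. if e k l mod p = m then w k l else 0) m)
   = (\<Sum>k\<in>A. \<Sum>l\<in>B. monom (w k l) (e k l mod p))"
proof -
  have "(\<Sum>m<p. monom (\<Sum>k\<in>A. \<Sum>l\<in>B. if e k l mod p = m then w k l else 0) m)
     = (\<Sum>k\<in>A. \<Sum>m<p. monom (\<Sum>l\<in>B. if e k l mod p = m then w k l else 0) m)"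
    by (simp add: monom_sum sum.swap[of _ "{..<p}"])
  also have "\<dots> = (\<Sum>k\<in>A. \<Sum>l\<in>B. monom (w k l) (e k l mod p))"
    by (intro sum.cong refl sum_monom_collect)
  finally show ?thesis .
qed

lemma opoly_osub: "ocong n (opoly (osub p x y) n) (opoly x n - opoly y n)"
proof -
  have "opoly (osub p x y) n = (\<Sum>k<p - 1. monom ((x n k - y n k) mod int p ^ n) k)"
    unfolding opoly_def osub_def by simp
  also have "ocong n \<dots> (\<Sum>k<p - 1. monom (x n k - y n k) k)"
    by (intro ocong_sum ocong_monom_coeff_mod)
  also have "\<dots> = opoly x n - opoly y n"
    by (simp add: opoly_def sum_subtractf flip: diff_monom)
  finally show ?thesis .
qed

lemma opoly_omul: "ocong n (opoly (omul p x y) n) (opoly x n * opoly y n)"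
proof -
  let ?c = "oconv p x y n"
  have "opoly (omul p x y) n = (\<Sum>m<p - 1. monom ((?c m - ?c (p - 1)) mod int p ^ n) m)"
    unfolding opoly_def omul_def by simp
  also have "ocong n \<dots> (\<Sum>m<p. monom (?c m) m)" by (rule ocong_reduce_top)
  also have "(\<Sum>m<p. monom (?c m) m) = (\<Sum>k<p - 1. \<Sum>l<p - 1. monom (x n k * y n l) ((k + l) mod p))"
    unfolding oconv_def by (rule sum_monom_collect2)
  also have "ocong n \<dots> (\<Sum>k<p - 1. \<Sum>l<p - 1. monom (x n k * y n l) (k + l))"
    by (intro ocong_sum ocong_sym[OF ocong_monom_mod])
  also have "\<dots> = opoly x n * opoly y n"
    by (simp add: opoly_def sum_product mult_monom)
  finally show ?thesis .
qed

lemma opoly_osigma: "ocong n (opoly (osigma p j x) n) (gal (nat (j mod int p)) (opoly x n))"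
proof -
  let ?s = "nat (j mod int p)"
  let ?c = "osigma_coeff p j x n"
  have "(j * int k) mod int p = int (?s * k mod p)" for k
    using p_gt_2 by (simp add: of_nat_mod mod_mult_left_eq)
  then have c: "?c m = (\<Sum>k<p - 1. if ?s * k mod p = m then x n k else 0)" for m
    unfolding osigma_coeff_def by (metis (no_types) of_nat_eq_iff)
  have "opoly (osigma p j x) n = (\<Sum>m<p - 1. monom ((?c m - ?c (p - 1)) mod int p ^ n) m)"
    unfolding opoly_def osigma_def by simp
  also have "ocong n \<dots> (\<Sum>m<p. monom (?c m) m)" by (rule ocong_reduce_top)
  also have "(\<Sum>m<p. monom (?c m) m) = (\<Sum>k<p - 1. monom (x n k) (?s * k mod p))"
    unfolding c by (rule sum_monom_collect)
  also have "ocong n \<dots> (\<Sum>k<p - 1. monom (x n k) (?s * k))"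
    by (intro ocong_sum ocong_sym[OF ocong_monom_mod])
  also have "\<dots> = gal ?s (opoly x n)" by (simp add: opoly_def gal_sum gal_monom)
  finally show ?thesis .
qed

lemma opoly_oone: "ocong n (opoly (oone p) n) 1"
proof -
  have "opoly (oone p) n = monom (1 mod int p ^ n) 0"
    using p_gt_2 by (simp add: opoly_def oone_def if_distrib[of "\<lambda>c. monom c _"] sum.delta cong: if_cong)
  also have "ocong n \<dots> (monom 1 0)" by (rule ocong_monom_coeff_mod)
  finally show ?thesis by (simp add: monom_0 one_pCons)
qed

lemma opoly_otheta: "ocong n (opoly (otheta p) n) (monom 1 1)"
proof -
  have "opoly (otheta p) n = monom (1 mod int p ^ n) 1"
    using p_gt_2 by (simp add: opoly_def otheta_def if_distrib[of "\<lambda>c. monom c _"] sum.delta cong: if_cong)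
  also have "ocong n \<dots> (monom 1 1)" by (rule ocong_monom_coeff_mod)
  finally show ?thesis .
qed

lemma opoly_opow: "ocong n (opoly (opow p x i) n) (opoly x n ^ i)"
proof (induction i)
  case 0
  then show ?case by (simp add: opow_def opoly_oone)
next
  case (Suc i)
  have "ocong n (opoly (opow p x (Suc i)) n) (opoly x n * opoly (opow p x i) n)"
    unfolding opow_def funpow.simps comp_def by (rule opoly_omul)
  also have "ocong n \<dots> (opoly x n * opoly x n ^ i)" by (rule ocong_mult_left[OF Suc])
  finally show ?case by simp
qed

lemma reduced_omul: "reduced (omul p x y) n"
  unfolding omul_def by (rule reduced_if_mod)

lemma reduced_osub: "reduced (osub p x y) n"
  unfolding osub_def by (rule reduced_if_mod)

lemma reduced_oone: "reduced (oone p) n"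
  using p_pos[of n] p_gt_2 by (simp add: reduced_def oone_def)

lemma reduced_otheta: "reduced (otheta p) n"
  using p_pos[of n] p_gt_2 by (simp add: reduced_def otheta_def)

lemma Ocar_omul: "x \<in> Ocar p \<Longrightarrow> y \<in> Ocar p \<Longrightarrow> omul p x y \<in> Ocar p"
  by (rule in_OcarI[OF reduced_omul opoly_omul coherent_mult]) (simp_all add: coherent_opoly)

lemma Ocar_oone: "oone p \<in> Ocar p"
  by (rule in_OcarI[OF reduced_oone opoly_oone coherent_const])

lemma Ocar_otheta: "otheta p \<in> Ocar p"
  by (rule in_OcarI[OF reduced_otheta opoly_otheta coherent_const])

lemma Ocar_opow: "x \<in> Ocar p \<Longrightarrow> opow p x i \<in> Ocar p"
  by (induction i) (simp_all add: opow_def Ocar_oone Ocar_omul)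

lemma opoly_otheta_power: "ocong n (opoly (opow p (otheta p) l) n) (monom 1 l)"
  using ocong_trans[OF opoly_opow ocong_power[OF opoly_otheta]] by (simp add: monom_power)

abbreviation opi :: oelt where
  "opi \<equiv> osub p (oone p) (otheta p)"

lemma opoly_opi: "ocong n (opoly opi n) \<pi>"
  unfolding uniformizer_def by (rule ocong_trans[OF opoly_osub ocong_diff[OF opoly_oone opoly_otheta]])

lemma opoly_opi_power_mult:
  "ocong n (opoly (omul p (opow p opi i) u) n) (\<pi> ^ i * opoly u n)"
  by (rule ocong_trans[OF opoly_omul ocong_mult[OF ocong_trans[OF opoly_opow ocong_power[OF opoly_opi]] ocong_refl]])

lemma uniformizer_power_p_minus_1: "\<exists>h. \<pi> ^ (p - 1) = Phi + smult (int p) h"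
proof -
  have "int p dvd coeff (\<pi> ^ (p - 1) - Phi) k" for k
  proof (cases "k < p")
    case True
    then show ?thesis
      using alternating_binomial_cong[OF prime_p True]
      by (simp add: coeff_uniformizer_power coeff_Phi cong_iff_dvd_diff)
  next
    case False
    then have "p - 1 < k" using p_gt_2 by simp
    then show ?thesis by (simp add: coeff_uniformizer_power coeff_Phi binomial_eq_0)
  qed
  then have "\<pi> ^ (p - 1) - Phi = smult (int p) (map_poly (\<lambda>c. c div int p) (\<pi> ^ (p - 1) - Phi))"
    by (rule smult_of_dvd_coeffs)
  then show ?thesis by (metis add.commute diff_add_cancel)
qed

lemma ocong_uniformizer_power_0: "ocong n (\<pi> ^ (n * (p - 1))) 0"
proof -
  obtain h where h: "\<pi> ^ (p - 1) = Phi + smult (int p) h" using uniformizer_power_p_minus_1 by blast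
  have "\<pi> ^ (p - 1) - smult (int p) h = smult (int p ^ n) 0 + Phi * 1"
    unfolding h by simp
  then have "ocong n (\<pi> ^ (p - 1)) (smult (int p) h)"
    by (rule ocongI)
  then have "ocong n ((\<pi> ^ (p - 1)) ^ n) (smult (int p) h ^ n)"
    by (rule ocong_power)
  also have "smult (int p) h ^ n = smult (int p ^ n) (h ^ n)"
    by (simp add: smult_power)
  also have "ocong n \<dots> 0" by (rule ocong_smult_prime_power)
  finally show ?thesis by (simp add: power_mult[symmetric] mult.commute)
qed

text \<open>A polynomial whose value at \<open>1\<close> is prime to \<open>p\<close> is a unit modulo \<open>\<pi>\<close>; since \<open>\<pi>\<close> is
  nilpotent modulo \<open>p^n\<close>, a truncated geometric series inverts it at every level.\<close>

lemma ocong_level_inverse: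
  assumes unit: "coprime (poly U 1) (int p)"
  shows "\<exists>W. ocong n (W * U) 1"
proof -
  obtain c where c: "[poly U 1 * c = 1] (mod int p ^ n)"
    using unit cong_solve_coprime_int[of "poly U 1" "int p ^ n"] by auto
  then obtain t where t: "1 - poly U 1 * c = int p ^ n * t"
    by (metis cong_iff_dvd_diff cong_sym dvdE)
  define D where "D = 1 - smult c U"
  define N where "N = n * (p - 1)"
  have "D = smult (int p ^ n) [:t:] + \<pi> * (- smult c (pi_quot U))"
  proof -
    have "D = [:1 - poly U 1 * c:] + \<pi> * (- smult c (pi_quot U))"
      unfolding D_def by (subst (1) pi_quot_eq[of U]) (simp add: smult_add_right algebra_simps one_pCons)
    then show ?thesis by (simp add: t)
  qed
  then have "ocong n D (\<pi> * (- smult c (pi_quot U)))"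
    by (intro ocongI[of _ _ _ "[:t:]" 0]) simp
  then have "ocong n (D ^ N) (\<pi> ^ N * (- smult c (pi_quot U)) ^ N)"
    by (metis ocong_power power_mult_distrib)
  also have "ocong n \<dots> (0 * (- smult c (pi_quot U)) ^ N)"
    unfolding N_def by (intro ocong_mult ocong_uniformizer_power_0 ocong_refl)
  finally have "ocong n (1 - D ^ N) 1"
    using ocong_diff[OF ocong_refl] by fastforce
  moreover have "smult c (\<Sum>k<N. D ^ k) * U = 1 - D ^ N"
    using one_diff_power_eq[of D N] by (simp add: D_def algebra_simps)
  ultimately show ?thesis by metis
qed

lemma coherent_inverse:
  assumes "coprime (poly U 1) (int p)"
  obtains V where "coherent V" and "\<And>n. ocong n (V n * U) 1"
proof -
  obtain V where V: "\<And>n. ocong n (V n * U) 1"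
    using ocong_level_inverse[OF assms] by metis
  have "ocong n (V (Suc n)) (V n)" for n
  proof -
    have "ocong n (V (Suc n)) (V (Suc n) * (V n * U))"
      using ocong_mult_left[OF V[of n], of "V (Suc n)"] by (simp add: ocong_sym)
    also have "V (Suc n) * (V n * U) = (V (Suc n) * U) * V n" by (simp add: algebra_simps)
    also have "ocong n \<dots> (1 * V n)" by (intro ocong_mult ocong_Suc[OF V] ocong_refl)
    finally show ?thesis by simp
  qed
  then show ?thesis using that V unfolding coherent_def by blast
qed

lemma oideal_elemE:
  assumes "z \<in> oideal p e"
  obtains u where "u \<in> Ocar p" and "\<And>n. reduced z n"
    and "\<And>n. ocong n (opoly z n) (\<pi> ^ e * opoly u n)"
  using assms reduced_omul opoly_opi_power_mult unfolding oideal_def by blast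

lemma in_oidealI:
  assumes "\<And>n. reduced z n" and "coherent Z" and "\<And>n. ocong n (opoly z n) (\<pi> ^ e * Z n)"
  shows "z \<in> oideal p e"
proof -
  have "z = omul p (opow p opi e) (of_levels Z)"
  proof (rule oelt_eqI[OF assms(1) reduced_omul])
    fix n
    have "ocong n (opoly z n) (\<pi> ^ e * Z n)" by (rule assms(3))
    also have "ocong n \<dots> (\<pi> ^ e * opoly (of_levels Z) n)"
      by (intro ocong_mult_left ocong_sym[OF ocong_opoly_of_levels])
    also have "ocong n \<dots> (opoly (omul p (opow p opi e) (of_levels Z)) n)"
      by (rule ocong_sym[OF opoly_opi_power_mult])
    finally show "ocong n (opoly z n) (opoly (omul p (opow p opi e) (of_levels Z)) n)" .
  qed
  then show ?thesis
    unfolding oideal_def using of_levels_in_Ocar[OF assms(2)] by blast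
qed

lemma oideal_monomial: "omul p (opow p opi i) (opow p (otheta p) l) \<in> oideal p i"
  unfolding oideal_def using Ocar_opow[OF Ocar_otheta] by blast

lemma Zp_mod_coord:
  assumes "w \<in> Ocar p"
  shows "(\<lambda>n. (d * w n k) mod int p ^ n) \<in> Zp p"
  unfolding Zp_def
proof (intro CollectI allI conjI)
  fix n
  show "0 \<le> (d * w n k) mod int p ^ n" "(d * w n k) mod int p ^ n < int p ^ n"
    using p_pos[of n] by simp_all
  have "(d * w (Suc n) k) mod int p ^ Suc n mod int p ^ n = (d * (w (Suc n) k mod int p ^ n)) mod int p ^ n"
    by (simp add: mod_mod_cancel mod_mult_right_eq)
  also have "w (Suc n) k mod int p ^ n = w n k"
    using assms unfolding Ocar_def by blast
  finally show "(d * w (Suc n) k) mod int p ^ Suc n mod int p ^ n = (d * w n k) mod int p ^ n" .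
qed

lemma opoly_zp_comb:
  fixes c :: "nat \<Rightarrow> nat \<Rightarrow> int" and s :: "nat \<Rightarrow> oelt"
  shows "ocong n (opoly (\<lambda>n k. if k < p - 1 then (\<Sum>l<m. c l n * s l n k) mod int p ^ n else 0) n)
     (\<Sum>l<m. smult (c l n) (opoly (s l) n))"
proof -
  have "opoly (\<lambda>n k. if k < p - 1 then (\<Sum>l<m. c l n * s l n k) mod int p ^ n else 0) n
     = (\<Sum>k<p - 1. monom ((\<Sum>l<m. c l n * s l n k) mod int p ^ n) k)"
    unfolding opoly_def by simp
  also have "ocong n \<dots> (\<Sum>k<p - 1. monom (\<Sum>l<m. c l n * s l n k) k)"
    by (intro ocong_sum ocong_monom_coeff_mod)
  also have "\<dots> = (\<Sum>l<m. smult (c l n) (opoly (s l) n))"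
    by (simp add: opoly_def monom_sum smult_sum_right smult_monom sum.swap[of _ "{..<m}"])
  finally show ?thesis .
qed

lemma in_zp_spanI:
  fixes m :: nat and c :: "nat \<Rightarrow> nat \<Rightarrow> int" and s :: "nat \<Rightarrow> oelt"
  assumes "\<And>n. reduced z n" and "\<forall>l<m. c l \<in> Zp p \<and> s l \<in> G"
    and "\<And>n. ocong n (opoly z n) (\<Sum>l<m. smult (c l n) (opoly (s l) n))"
  shows "z \<in> zp_span p G"
proof -
  let ?w = "\<lambda>n k. if k < p - 1 then (\<Sum>l<m. c l n * s l n k) mod int p ^ n else 0"
  have "z = ?w"
  proof (rule oelt_eqI[OF assms(1) reduced_if_mod])
    show "ocong n (opoly z n) (opoly ?w n)" for n
      using ocong_trans[OF assms(3) ocong_sym[OF opoly_zp_comb]] .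
  qed
  then show ?thesis unfolding zp_span_def using assms(2) by blast
qed

lemma zp_span_subset_oideal:
  assumes "G \<subseteq> oideal p e"
  shows "zp_span p G \<subseteq> oideal p e"
proof
  fix z assume "z \<in> zp_span p G"
  then obtain m :: nat and c :: "nat \<Rightarrow> nat \<Rightarrow> int" and s :: "nat \<Rightarrow> oelt" where cs: "\<forall>l<m. c l \<in> Zp p \<and> s l \<in> G"
    and z: "z = (\<lambda>n k. if k < p - 1 then (\<Sum>l<m. c l n * s l n k) mod int p ^ n else 0)"
    unfolding zp_span_def by blast
  have "\<forall>l<m. \<exists>u. u \<in> Ocar p \<and> (\<forall>n. ocong n (opoly (s l) n) (\<pi> ^ e * opoly u n))"
    using cs assms by (metis oideal_elemE subsetD)
  then obtain u where u: "\<And>l. l < m \<Longrightarrow> u l \<in> Ocar p \<and> (\<forall>n. ocong n (opoly (s l) n) (\<pi> ^ e * opoly (u l) n))"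
    by metis
  show "z \<in> oideal p e"
  proof (rule in_oidealI)
    show "reduced z n" for n unfolding z by (rule reduced_if_mod)
    show "coherent (\<lambda>n. \<Sum>l<m. smult (c l n) (opoly (u l) n))"
      using cs u by (intro coherent_sum coherent_smult_Zp coherent_opoly) auto
    fix n
    have "ocong n (opoly z n) (\<Sum>l<m. smult (c l n) (opoly (s l) n))"
      unfolding z by (rule opoly_zp_comb)
    also have "ocong n \<dots> (\<Sum>l<m. smult (c l n) (\<pi> ^ e * opoly (u l) n))"
      using u by (intro ocong_sum ocong_smult) auto
    also have "\<dots> = \<pi> ^ e * (\<Sum>l<m. smult (c l n) (opoly (u l) n))"
      by (simp add: sum_distrib_left)
    finally show "ocong n (opoly z n) (\<pi> ^ e * (\<Sum>l<m. smult (c l n) (opoly (u l) n)))" .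
  qed
qed

lemma oideal_unit_factor:
  assumes "coprime (poly U 1) (int p)" and "z \<in> oideal p e"
  obtains Q where "Q \<in> Ocar p" and "\<And>n. ocong n (opoly z n) (\<pi> ^ e * U * opoly Q n)"
proof -
  obtain u where u: "u \<in> Ocar p" "\<And>n. ocong n (opoly z n) (\<pi> ^ e * opoly u n)"
    using assms(2) oideal_elemE by metis
  obtain V where V: "coherent V" "\<And>n. ocong n (V n * U) 1"
    using coherent_inverse[OF assms(1)] by blast
  define Q where "Q = of_levels (\<lambda>n. V n * opoly u n)"
  have "Q \<in> Ocar p"
    unfolding Q_def by (intro of_levels_in_Ocar coherent_mult V coherent_opoly u)
  moreover have "ocong n (opoly z n) (\<pi> ^ e * U * opoly Q n)" for n
  proof -
    have "ocong n (opoly z n) (\<pi> ^ e * (1 * opoly u n))" using u(2) by simp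
    also have "ocong n \<dots> (\<pi> ^ e * ((V n * U) * opoly u n))"
      by (intro ocong_mult_left ocong_mult ocong_sym[OF V(2)] ocong_refl)
    also have "\<dots> = \<pi> ^ e * U * (V n * opoly u n)" by (simp add: algebra_simps)
    also have "ocong n \<dots> (\<pi> ^ e * U * opoly Q n)"
      unfolding Q_def by (intro ocong_mult_left ocong_sym[OF ocong_opoly_of_levels])
    finally show ?thesis .
  qed
  ultimately show ?thesis by (rule that)
qed

text \<open>Since \<open>U\<close> is a unit, \<open>\<pi>^e O = \<pi>^e U O\<close>; expanding the second factor in the basis
  \<open>\<theta>^0, \<dots>, \<theta>^(p-2)\<close> writes every element as a \<open>\<int>\<^sub>p\<close>-combination of the \<open>g l + d h l\<close>.\<close>

lemma oideal_subset_zp_span: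
  assumes G: "\<And>l. l < p - 1 \<Longrightarrow> g l \<in> G \<and> h l \<in> G"
    and gen: "\<And>n l. l < p - 1 \<Longrightarrow>
      ocong n (opoly (g l) n + smult d (opoly (h l) n)) (\<pi> ^ e * monom 1 l * U)"
    and unit: "coprime (poly U 1) (int p)"
  shows "oideal p e \<subseteq> zp_span p G"
proof
  fix z assume z: "z \<in> oideal p e"
  obtain Q where Q: "Q \<in> Ocar p" "\<And>n. ocong n (opoly z n) (\<pi> ^ e * U * opoly Q n)"
    using oideal_unit_factor[OF unit z] by blast
  define A where "A = p - 1"
  define c where "c l n = (if l < A then Q n l else d * Q n (l - A)) mod int p ^ n" for l n
  define s where "s l = (if l < A then g l else h (l - A))" for l
  show "z \<in> zp_span p G"
  proof (rule in_zp_spanI)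
    show "reduced z n" for n using z by (rule oideal_elemE)
    show "\<forall>l<A + A. c l \<in> Zp p \<and> s l \<in> G"
      using Zp_mod_coord[OF Q(1), of 1] Zp_mod_coord[OF Q(1), of d] G
      by (auto simp: c_def[abs_def] s_def A_def)
    fix n
    have "ocong n (opoly z n) (\<Sum>l<A. smult (Q n l) (\<pi> ^ e * monom 1 l * U))"
      using Q(2)[of n] by (simp add: opoly_eq_sum_smult A_def sum_distrib_left algebra_simps)
    also have "ocong n \<dots> (\<Sum>l<A. smult (Q n l) (opoly (g l) n + smult d (opoly (h l) n)))"
      by (intro ocong_sum ocong_smult ocong_sym[OF gen]) (simp add: A_def)
    also have "\<dots> = (\<Sum>l<A. smult (Q n l) (opoly (g l) n)) + (\<Sum>l<A. smult (d * Q n l) (opoly (h l) n))"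
      by (simp add: sum.distrib smult_add_right mult.commute)
    also have "ocong n \<dots> ((\<Sum>l<A. smult (c l n) (opoly (s l) n)) + (\<Sum>l<A. smult (c (A + l) n) (opoly (s (A + l)) n)))"
      by (intro ocong_add ocong_sum) (simp_all add: c_def s_def ocong_sym[OF ocong_smult_mod])
    also have "\<dots> = (\<Sum>l<A + A. smult (c l n) (opoly (s l) n))"
      by (rule sum_lessThan_add[symmetric])
    finally show "ocong n (opoly z n) (\<Sum>l<A + A. smult (c l n) (opoly (s l) n))" .
  qed
qed

lemma coprime_small: "0 < s \<Longrightarrow> s < p \<Longrightarrow> coprime s p"
  using prime_imp_coprime[OF prime_p, of s] nat_dvd_not_less[of s p] by (simp add: coprime_commute)

lemma coherent_gal_quot_opoly: "u \<in> Ocar p \<Longrightarrow> coherent (\<lambda>n. gal_quot s (opoly u n))"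
  unfolding opoly_eq_sum_smult gal_quot_sum_smult by (rule coherent_coord_comb)

context
  fixes s t :: nat
  assumes coprime_s: "coprime s p" and coprime_t: "coprime t p"
begin

lemma ocong_wedge_gal:
  "ocong n f f' \<Longrightarrow> ocong n g g' \<Longrightarrow> ocong n (wedge_gal s t f g) (wedge_gal s t f' g')"
  unfolding wedge_gal_def by (intro ocong_diff ocong_mult ocong_gal coprime_s coprime_t)

lemma coherent_wedge_cofactor:
  "u \<in> Ocar p \<Longrightarrow> v \<in> Ocar p \<Longrightarrow> coherent (\<lambda>n. wedge_cofactor s t i j (opoly u n) (opoly v n))"
  unfolding wedge_cofactor_def
  by (intro coherent_diff coherent_mult coherent_const coherent_gal coprime_s coprime_t coherent_opoly)

lemma coherent_wedge_rest:
  "u \<in> Ocar p \<Longrightarrow> v \<in> Ocar p \<Longrightarrow> coherent (\<lambda>n. wedge_rest s t i j (opoly u n) (opoly v n))"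
  unfolding wedge_rest_def
  by (intro coherent_add coherent_diff coherent_mult coherent_const coherent_gal coprime_s coprime_t
      coherent_opoly coherent_gal_quot_opoly)

end

end

section \<open>The map \<open>\<vartheta>\<^sub>a\<close>\<close>

locale vartheta_setting = odd_prime +
  fixes a :: int
  assumes a_ge_2: "2 \<le> a" and a_le_half: "a \<le> (int p - 1) div 2"
begin

text \<open>Exponents in \<open>[0, p)\<close> of \<open>\<sigma>\<^sub>a\<close> and \<open>\<sigma>\<^sub>1\<^sub>-\<^sub>a\<close>.\<close>

definition sa :: nat where "sa = nat a"
definition sb :: nat where "sb = p + 1 - nat a"

lemma sa_sb: "sa + sb = p + 1" "2 \<le> sa" "sa < sb" "sb < p" "int sa = a"
  using a_ge_2 a_le_half by (auto simp: sa_def sb_def)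

lemma sa_mod: "nat (a mod int p) = sa"
  using a_ge_2 a_le_half by (simp add: sa_def mod_pos_pos_trivial)

lemma sb_mod: "nat ((1 - a) mod int p) = sb"
proof -
  have "(1 - a) mod int p = (1 - a + int p) mod int p" by simp
  also have "\<dots> = 1 - a + int p"
    using a_ge_2 a_le_half by (intro mod_pos_pos_trivial) auto
  finally have "(1 - a) mod int p = 1 - a + int p" .
  then show ?thesis using a_ge_2 a_le_half by (simp add: sb_def nat_diff_distrib)
qed

lemma coprime_sa: "coprime sa p" and coprime_sb: "coprime sb p" and coprime_sb_sa: "coprime (sb - sa) p"
  using sa_sb by (auto intro: coprime_small)

lemma opoly_vartheta: "ocong n (opoly (vartheta p a x y) n) (wedge_gal sa sb (opoly x n) (opoly y n))"
  unfolding vartheta_def wedge_gal_def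
  using opoly_osigma[of n a] opoly_osigma[of n "1 - a"]
  by (intro ocong_trans[OF opoly_osub] ocong_diff ocong_trans[OF opoly_omul] ocong_mult)
    (simp_all add: sa_mod sb_mod)

lemma reduced_vartheta: "reduced (vartheta p a x y) n"
  by (simp add: vartheta_def reduced_osub)

lemma vartheta_otheta_mult:
  "vartheta p a (omul p (otheta p) x) (omul p (otheta p) y) = omul p (otheta p) (vartheta p a x y)"
proof (rule oelt_eqI[OF reduced_vartheta reduced_omul])
  fix n
  let ?X = "monom 1 1 :: int poly"
  have "ocong n (opoly (vartheta p a (omul p (otheta p) x) (omul p (otheta p) y)) n)
      (wedge_gal sa sb (?X * opoly x n) (?X * opoly y n))"
    by (rule ocong_trans[OF opoly_vartheta])
      (intro ocong_wedge_gal coprime_sa coprime_sb ocong_trans[OF opoly_omul] ocong_mult opoly_otheta ocong_refl)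
  also have "\<dots> = monom 1 (p + 1) * wedge_gal sa sb (opoly x n) (opoly y n)"
    by (simp only: wedge_gal_monom_mult sa_sb(1))
  also have "ocong n \<dots> (?X * wedge_gal sa sb (opoly x n) (opoly y n))"
    using p_gt_2 by (intro ocong_mult ocong_refl ocong_monom_cong) (simp add: cong_def mod_Suc)
  also have "ocong n \<dots> (opoly (omul p (otheta p) (vartheta p a x y)) n)"
    by (rule ocong_sym[OF ocong_trans[OF opoly_omul ocong_mult[OF opoly_otheta opoly_vartheta]]])
  finally show "ocong n (opoly (vartheta p a (omul p (otheta p) x) (omul p (otheta p) y)) n)
      (opoly (omul p (otheta p) (vartheta p a x y)) n)" .
qed

definition cofactor_const :: "nat \<Rightarrow> nat \<Rightarrow> int" where
  "cofactor_const i j = int sa ^ i * int sb ^ j - int sb ^ i * int sa ^ j"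

lemma vartheta_oidealE:
  assumes "x \<in> oideal p i" and "y \<in> oideal p j"
  obtains u v where "u \<in> Ocar p" and "v \<in> Ocar p"
    and "\<And>n. ocong n (opoly (vartheta p a x y) n) (\<pi> ^ (i + j) * wedge_cofactor sa sb i j (opoly u n) (opoly v n))"
proof -
  obtain u where u: "u \<in> Ocar p" "\<And>n. ocong n (opoly x n) (\<pi> ^ i * opoly u n)"
    using assms(1) oideal_elemE by metis
  obtain v where v: "v \<in> Ocar p" "\<And>n. ocong n (opoly y n) (\<pi> ^ j * opoly v n)"
    using assms(2) oideal_elemE by metis
  have "ocong n (opoly (vartheta p a x y) n) (\<pi> ^ (i + j) * wedge_cofactor sa sb i j (opoly u n) (opoly v n))" for n
    using ocong_trans[OF opoly_vartheta ocong_wedge_gal[OF coprime_sa coprime_sb u(2) v(2)]]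
    by (simp add: wedge_gal_uniformizer_powers)
  with u(1) v(1) show ?thesis by (rule that)
qed

lemma vartheta_in_oideal:
  assumes "x \<in> oideal p i" and "y \<in> oideal p j"
  shows "vartheta p a x y \<in> oideal p (i + j)"
proof -
  obtain u v where uv: "u \<in> Ocar p" "v \<in> Ocar p"
    and "\<And>n. ocong n (opoly (vartheta p a x y) n) (\<pi> ^ (i + j) * wedge_cofactor sa sb i j (opoly u n) (opoly v n))"
    using vartheta_oidealE[OF assms] by blast
  then show ?thesis
    by (intro in_oidealI[OF reduced_vartheta coherent_wedge_cofactor[OF coprime_sa coprime_sb uv]])
qed

text \<open>When \<open>p\<close> divides \<open>cofactor_const i j\<close>, the constant term of the cofactor is absorbed using
  \<open>p \<equiv> Phi - \<pi> pi_quot Phi \<equiv> -\<pi> pi_quot Phi\<close>.\<close>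

lemma vartheta_in_oideal_Suc:
  assumes "x \<in> oideal p i" and "y \<in> oideal p j" and "int p dvd cofactor_const i j"
  shows "vartheta p a x y \<in> oideal p (i + j + 1)"
proof -
  obtain u v where uv: "u \<in> Ocar p" "v \<in> Ocar p"
    and base: "\<And>n. ocong n (opoly (vartheta p a x y) n) (\<pi> ^ (i + j) * wedge_cofactor sa sb i j (opoly u n) (opoly v n))"
    using vartheta_oidealE[OF assms(1,2)] by blast
  obtain t where t: "cofactor_const i j = int p * t" using assms(3) by blast
  define W where "W n = gal sb (opoly u n) * gal sa (opoly v n)" for n
  define Z where "Z n = wedge_rest sa sb i j (opoly u n) (opoly v n) - smult t (pi_quot Phi * W n)" for n
  have Phi: "smult (int p) f = Phi * f - \<pi> * (pi_quot Phi * f)" for f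
  proof -
    have "Phi * f = ([:int p:] + \<pi> * pi_quot Phi) * f"
      by (subst (1) pi_quot_eq[of Phi]) (simp add: poly_geom_poly_1)
    then show ?thesis by (simp add: algebra_simps)
  qed
  show ?thesis
  proof (rule in_oidealI[OF reduced_vartheta])
    show "coherent Z"
      unfolding Z_def W_def using uv
      by (intro coherent_diff coherent_wedge_rest coherent_mult coherent_const
          coherent_smult coherent_gal coprime_sa coprime_sb coherent_opoly)
    fix n
    have dec: "wedge_cofactor sa sb i j (opoly u n) (opoly v n)
        = smult (cofactor_const i j) (W n) + \<pi> * wedge_rest sa sb i j (opoly u n) (opoly v n)"
      unfolding cofactor_const_def W_def by (rule wedge_cofactor_decomp)
    have e: "smult (cofactor_const i j) (W n) = Phi * smult t (W n) - \<pi> * smult t (pi_quot Phi * W n)"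
      by (simp only: t Phi smult_smult[symmetric] mult_smult_right)
    have "\<pi> ^ (i + j) * wedge_cofactor sa sb i j (opoly u n) (opoly v n)
        = \<pi> ^ (i + j) * (Phi * smult t (W n) - \<pi> * smult t (pi_quot Phi * W n)
            + \<pi> * wedge_rest sa sb i j (opoly u n) (opoly v n))"
      by (simp only: dec e)
    also have "\<dots> = \<pi> ^ (i + j + 1) * Z n + Phi * smult t (\<pi> ^ (i + j) * W n)"
      by (simp add: Z_def algebra_simps)
    also have "ocong n \<dots> (\<pi> ^ (i + j + 1) * Z n + 0)"
      by (intro ocong_add ocong_refl ocong_Phi_mult)
    finally show "ocong n (opoly (vartheta p a x y) n) (\<pi> ^ (i + j + 1) * Z n)"
      using ocong_trans[OF base] by simp
  qed
qed

abbreviation vartheta_pairs :: "nat \<Rightarrow> nat \<Rightarrow> oelt set" where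
  "vartheta_pairs i j \<equiv> {vartheta p a x y | x y. x \<in> oideal p i \<and> y \<in> oideal p j}"

definition vartheta_monomial :: "nat \<Rightarrow> nat \<Rightarrow> nat \<Rightarrow> nat \<Rightarrow> oelt" where
  "vartheta_monomial i j l1 l2 =
     vartheta p a (omul p (opow p opi i) (opow p (otheta p) l1)) (omul p (opow p opi j) (opow p (otheta p) l2))"

lemma vartheta_monomial_in_pairs: "vartheta_monomial i j l1 l2 \<in> vartheta_pairs i j"
  unfolding vartheta_monomial_def using oideal_monomial by blast

lemma opoly_vartheta_monomial:
  "ocong n (opoly (vartheta_monomial i j l1 l2) n)
     (\<pi> ^ (i + j) * (pi_ratio sa sb i j * monom 1 (sa * l1 + sb * l2) - pi_ratio sb sa i j * monom 1 (sb * l1 + sa * l2)))"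
proof -
  have "ocong n (opoly (vartheta_monomial i j l1 l2) n) (wedge_gal sa sb (\<pi> ^ i * monom 1 l1) (\<pi> ^ j * monom 1 l2))"
    unfolding vartheta_monomial_def
    by (intro ocong_trans[OF opoly_vartheta] ocong_wedge_gal coprime_sa coprime_sb
        ocong_trans[OF opoly_opi_power_mult] ocong_mult_left opoly_otheta_power)
  also have "wedge_gal sa sb (\<pi> ^ i * monom 1 l1) (\<pi> ^ j * monom 1 l2)
      = \<pi> ^ (i + j) * (pi_ratio sa sb i j * monom 1 (sa * l1 + sb * l2) - pi_ratio sb sa i j * monom 1 (sb * l1 + sa * l2))"
    unfolding wedge_gal_uniformizer_powers wedge_cofactor_def by (simp only: gal_monom mult.assoc mult_monom mult_1)
  finally show ?thesis .
qed

lemma exponent_cong: "[sa * k + sb * k + r = k + r] (mod p)"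
proof -
  have "sa * k + sb * k + r = (sa + sb) * k + r" by (simp add: add_mult_distrib)
  also have "\<dots> = (k + r) + p * k" using sa_sb(1) by simp
  finally show ?thesis by (simp only: cong_def mod_mult_self2)
qed

lemma oideal_subset_span_coprime:
  assumes "coprime (cofactor_const i j) (int p)"
  shows "oideal p (i + j) \<subseteq> zp_span p (vartheta_pairs i j)"
proof (rule oideal_subset_zp_span[where g = "\<lambda>l. vartheta_monomial i j l l" and h = "\<lambda>l. vartheta_monomial i j l l"
      and d = 0 and U = "pi_ratio sa sb i j - pi_ratio sb sa i j"])
  show "vartheta_monomial i j l l \<in> vartheta_pairs i j \<and> vartheta_monomial i j l l \<in> vartheta_pairs i j" for l
    using vartheta_monomial_in_pairs by blast
  show "coprime (poly (pi_ratio sa sb i j - pi_ratio sb sa i j) 1) (int p)"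
    using assms by (simp add: poly_pi_ratio_1 cofactor_const_def mult.commute)
  fix n l
  let ?P = "\<pi> ^ (i + j)" and ?A = "pi_ratio sa sb i j" and ?B = "pi_ratio sb sa i j"
  have "ocong n (opoly (vartheta_monomial i j l l) n) (?P * (?A * monom 1 (sa * l + sb * l) - ?B * monom 1 (sb * l + sa * l)))"
    by (rule opoly_vartheta_monomial)
  also have "\<dots> = ?P * (?A - ?B) * monom 1 (sa * l + sb * l + 0)"
    by (simp add: algebra_simps)
  also have "ocong n \<dots> (?P * (?A - ?B) * monom 1 (l + 0))"
    by (intro ocong_mult_left ocong_monom_cong exponent_cong)
  finally show "ocong n (opoly (vartheta_monomial i j l l) n + smult 0 (opoly (vartheta_monomial i j l l) n))
      (?P * monom 1 l * (?A - ?B))"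
    by (simp add: algebra_simps)
qed

text \<open>The two generators used below differ by \<open>\<pi>^(i+j) B (\<theta>^(l+sb) - \<theta>^(l+sa))\<close> with
  \<open>B = pi_ratio sb sa i j\<close>, and the factor \<open>\<theta>^(sb-sa) - 1\<close> contributes one more power of \<open>\<pi>\<close>.\<close>

lemma oideal_Suc_subset_span:
  "oideal p (i + j + 1) \<subseteq> zp_span p (vartheta_pairs i j)"
proof (rule oideal_subset_zp_span[where g = "\<lambda>l. vartheta_monomial i j l (l + 1)"
      and h = "\<lambda>l. vartheta_monomial i j (l + sb) (l + sb)" and d = "-1"
      and U = "- (pi_ratio sb sa i j * monom 1 sa * geom_poly (sb - sa))"])
  show "vartheta_monomial i j l (l + 1) \<in> vartheta_pairs i j \<and> vartheta_monomial i j (l + sb) (l + sb) \<in> vartheta_pairs i j" for l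
    using vartheta_monomial_in_pairs by blast
  have "coprime (int sb ^ i * int sa ^ j * int (sb - sa)) (int p)"
    using coprime_sa coprime_sb coprime_sb_sa by simp
  then show "coprime (poly (- (pi_ratio sb sa i j * monom 1 sa * geom_poly (sb - sa))) 1) (int p)"
    by (simp add: poly_pi_ratio_1 poly_geom_poly_1 poly_monom)
  fix n l
  let ?P = "\<pi> ^ (i + j)" and ?A = "pi_ratio sa sb i j" and ?B = "pi_ratio sb sa i j"
  have "ocong n (opoly (vartheta_monomial i j l (l + 1)) n - opoly (vartheta_monomial i j (l + sb) (l + sb)) n)
      (?P * (?A * monom 1 (sa * l + sb * l + sb) - ?B * monom 1 (sa * l + sb * l + sa))
        - ?P * (?A - ?B) * monom 1 (sa * (l + sb) + sb * (l + sb) + 0))"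
    using ocong_diff[OF opoly_vartheta_monomial opoly_vartheta_monomial, of n i j l "l + 1" i j "l + sb" "l + sb"]
    by (simp add: algebra_simps)
  also have "ocong n \<dots> (?P * (?A * monom 1 (l + sb) - ?B * monom 1 (l + sa)) - ?P * (?A - ?B) * monom 1 (l + sb + 0))"
    by (intro ocong_diff ocong_mult_left ocong_monom_cong exponent_cong)
  also have "\<dots> = ?P * ?B * (monom 1 (l + sa) * monom 1 (sb - sa) - monom 1 (l + sa))"
    using sa_sb(3) by (simp add: mult_monom algebra_simps)
  also have "\<dots> = ?P * ?B * (monom 1 l * monom 1 sa * - (1 - monom 1 (sb - sa)))"
    by (simp add: mult_monom algebra_simps)
  also have "\<dots> = \<pi> ^ (i + j + 1) * monom 1 l * - (?B * monom 1 sa * geom_poly (sb - sa))"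
    by (simp only: one_minus_monom_eq) (simp add: algebra_simps)
  finally show "ocong n (opoly (vartheta_monomial i j l (l + 1)) n + smult (-1) (opoly (vartheta_monomial i j (l + sb) (l + sb)) n))
      (\<pi> ^ (i + j + 1) * monom 1 l * - (?B * monom 1 sa * geom_poly (sb - sa)))"
    by simp
qed

lemma ord_a_dvd_iff_cong: "ord_a p a dvd d \<longleftrightarrow> [int sa ^ d = int sb ^ d] (mod int p)"
proof -
  define x where "x = (a * modular_inverse (int p) (1 - a)) mod int p"
  have "(1 - a) mod int p = int sb"
    using p_gt_2 by (simp add: sb_mod[symmetric])
  then have b: "[1 - a = int sb] (mod int p)" and "coprime (1 - a) (int p)"
    using sa_sb(4) coprime_sb p_gt_2 coprime_mod_left_iff[of "int p" "1 - a"] by (simp_all add: cong_def)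
  have "[x * (1 - a) = (a * modular_inverse (int p) (1 - a)) * (1 - a)] (mod int p)"
    unfolding x_def by (simp add: cong_def mod_mult_left_eq)
  also have "(a * modular_inverse (int p) (1 - a)) * (1 - a) = a * ((1 - a) * modular_inverse (int p) (1 - a))"
    by (simp add: algebra_simps)
  also have "[\<dots> = a * 1] (mod int p)"
    by (intro cong_mult cong_refl cong_modular_inverse1 \<open>coprime (1 - a) (int p)\<close>)
  finally have "[(x * (1 - a)) ^ d = (a * 1) ^ d] (mod int p)"
    by (rule cong_pow)
  then have xb: "[x ^ d * (1 - a) ^ d = a ^ d] (mod int p)"
    by (simp only: power_mult_distrib mult_1_right)
  have bd: "[(1 - a) ^ d = int sb ^ d] (mod int p)"
    using b by (rule cong_pow)
  have cop: "coprime ((1 - a) ^ d) (int p)" using \<open>coprime (1 - a) (int p)\<close> by simp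
  have x: "int (nat x) = x" using p_gt_2 by (simp add: x_def)
  have "ord (int p) x = ord p (nat x)"
    using ord_of_nat[of p "nat x", unfolded x] .
  then have "ord_a p a = ord p (nat x)"
    by (simp add: ord_a_def flip: x_def)
  then have "ord_a p a dvd d \<longleftrightarrow> [nat x ^ d = 1] (mod p)"
    by (simp only: ord_divides)
  also have "\<dots> \<longleftrightarrow> [x ^ d = 1] (mod int p)"
    by (rule cong_int_iff[of "nat x ^ d" 1 p, unfolded of_nat_power x of_nat_1, symmetric])
  also have "\<dots> \<longleftrightarrow> [x ^ d * (1 - a) ^ d = 1 * (1 - a) ^ d] (mod int p)"
    by (rule cong_mult_rcancel[OF cop, symmetric])
  also have "\<dots> \<longleftrightarrow> [a ^ d = (1 - a) ^ d] (mod int p)"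
    unfolding mult_1 using cong_trans[OF cong_sym[OF xb]] cong_trans[OF xb] by blast
  also have "\<dots> \<longleftrightarrow> [int sa ^ d = int sb ^ d] (mod int p)"
    unfolding sa_sb(5) using cong_trans[OF _ bd] cong_trans[OF _ cong_sym[OF bd]] by blast
  finally show ?thesis .
qed

lemma ord_a_dvd_diff_iff: "int (ord_a p a) dvd (int i - int j) \<longleftrightarrow> int p dvd cofactor_const i j"
proof -
  have key: "int (ord_a p a) dvd (int i - int j) \<longleftrightarrow> int p dvd cofactor_const i j" if "j \<le> i" for i j
  proof -
    obtain d where i: "i = j + d" using \<open>j \<le> i\<close> le_Suc_ex by blast
    have cop: "coprime (int p) ((int sa * int sb) ^ j)"
      using coprime_sa coprime_sb by (simp add: coprime_commute)
    have "int (ord_a p a) dvd (int i - int j) \<longleftrightarrow> ord_a p a dvd d" by (simp add: i)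
    also have "\<dots> \<longleftrightarrow> int p dvd (int sa ^ d - int sb ^ d)"
      by (simp add: ord_a_dvd_iff_cong cong_iff_dvd_diff)
    also have "\<dots> \<longleftrightarrow> int p dvd ((int sa * int sb) ^ j * (int sa ^ d - int sb ^ d))"
      by (rule coprime_dvd_mult_right_iff[OF cop, symmetric])
    also have "(int sa * int sb) ^ j * (int sa ^ d - int sb ^ d) = cofactor_const i j"
      unfolding cofactor_const_def i power_add power_mult_distrib right_diff_distrib by (simp only: ac_simps)
    finally show ?thesis .
  qed
  show ?thesis
  proof (cases "j \<le> i")
    case False
    then have swap: "int (ord_a p a) dvd (int j - int i) \<longleftrightarrow> int p dvd cofactor_const j i" by (intro key) simp
    have "cofactor_const j i = - cofactor_const i j" and "int j - int i = - (int i - int j)"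
      by (simp_all add: cofactor_const_def)
    then show ?thesis using swap by (simp only: dvd_minus_iff)
  qed (rule key)
qed

theorem zp_span_vartheta_pairs:
  "zp_span p (vartheta_pairs i j) = oideal p (i + j + (if int (ord_a p a) dvd (int i - int j) then 1 else 0))"
proof (cases "int p dvd cofactor_const i j")
  case True
  have "zp_span p (vartheta_pairs i j) \<subseteq> oideal p (i + j + 1)"
    using vartheta_in_oideal_Suc[OF _ _ True] by (intro zp_span_subset_oideal) blast
  then have "zp_span p (vartheta_pairs i j) = oideal p (i + j + 1)"
    using oideal_Suc_subset_span by (rule subset_antisym)
  with True show ?thesis by (simp add: ord_a_dvd_diff_iff)
next
  case False
  then have "coprime (cofactor_const i j) (int p)"
    using prime_p by (simp add: prime_imp_coprime coprime_commute)
  then have "oideal p (i + j) \<subseteq> zp_span p (vartheta_pairs i j)"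
    by (rule oideal_subset_span_coprime)
  moreover have "zp_span p (vartheta_pairs i j) \<subseteq> oideal p (i + j)"
    using vartheta_in_oideal by (intro zp_span_subset_oideal) blast
  ultimately have "zp_span p (vartheta_pairs i j) = oideal p (i + j)" by blast
  with False show ?thesis by (simp add: ord_a_dvd_diff_iff)
qed

end

theorem lemma2p3:
  fixes p :: nat and a :: int
  assumes "prime p" and "p \<ge> 5"
    and "2 \<le> a" and "a \<le> (int p - 1) div 2"
  shows "(\<forall>i j :: nat.
           zp_span p {vartheta p a x y | x y. x \<in> oideal p i \<and> y \<in> oideal p j}
             = oideal p (i + j + (if int (ord_a p a) dvd (int i - int j) then 1 else 0)))
       \<and> (\<forall>i :: nat.
           zp_span p {vartheta p a x y | x y. x \<in> oideal p i \<and> y \<in> oideal p i}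
             = oideal p (2 * i + 1))
       \<and> (\<forall>x \<in> Ocar p. \<forall>y \<in> Ocar p.
           vartheta p a (omul p (otheta p) x) (omul p (otheta p) y)
             = omul p (otheta p) (vartheta p a x y))"
proof -
  interpret vartheta_setting p a
    using assms by unfold_locales auto
  have "zp_span p (vartheta_pairs i i) = oideal p (2 * i + 1)" for i
    using zp_span_vartheta_pairs[of i i] by (simp add: mult_2)
  then show ?thesis
    using zp_span_vartheta_pairs vartheta_otheta_mult by blast
qed

end
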